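(* Let $\Gamma>0$. For $M\ge1$ and $s>\sqrt M$ define $$\tilde\rho^{M,{\rm d}}(s)=\frac{e^{\beta f(\Gamma,1/\pi)}}{M^{\Gamma/4}}\exp\Big(-\frac{M\Gamma}{2}\Big(\frac{s^2}{M}-1\Big)+M\Gamma\log\frac{s}{\sqrt M}-\frac\Gamma2\log\Big(\frac{s^2}{M}-1\Big)\Big),$$ and for $s<0$ define $$\tilde\rho^{M,{\rm c}}(s)=\Big(\frac{2\pi}{\sqrt M}\Big)^{\Gamma/2}e^{\beta f(\Gamma,1)}\frac{e^{-\Gamma\pi s^2+\Gamma\pi s/\sqrt M}}{(1-e^{4\pi s/\sqrt M})^{\Gamma/2}}.$$ Then for every fixed $y<0$, $$\lim_{N\to\infty}\tilde\rho^{N+1,{\rm d}}\big(\sqrt N-y\big)=\lim_{N\to\infty}\frac1\pi\,\tilde\rho^{N,{\rm c}}\big(y/\sqrt\pi\big)=e^{\beta f(\Gamma,1/\pi)}\frac{e^{-\Gamma y^2}}{(2|y|)^{\Gamma/2}}.$$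
   Context: $\beta f(\Gamma,\rho_b)$ is the dimensionless free energy per particle of the two-dimensional one-component plasma at coupling $\Gamma$ and background density $\rho_b$: $\beta f(\Gamma,\rho_b)=\lim_{N\to\infty}-\frac1N\log Z^{\rm d}_{N,\Gamma}(\rho_b)$ with $Z^{\rm d}_{N,\Gamma}(\rho_b)=\frac1{N!}\int_{(\mathbb R^2)^N}e^{-\Gamma N^2(\frac12\log R-\frac38)}e^{-\pi\Gamma\rho_b\sum_j|\vec r_j|^2/2}\prod_{j<k}|\vec r_k-\vec r_j|^\Gamma\,d\vec r_1\cdots d\vec r_N$, $R=\sqrt{N/(\pi\rho_b)}$. It is known that $\beta f(\Gamma,\rho_b)=(1-\frac\Gamma4)\log\rho_b+g(\Gamma)$ for a function $g$ independent of $\rho_b$. The functions $\tilde\rho^{M,{\rm d}}$ and $\tilde\rho^{M,{\rm c}}$ are the large-deviation forms (without the $o(1)$ terms) of the one-body density outside the plasma in the soft disk ($\rho_b=1/\pi$, unscaled radial coordinate $s$) and soft cylinder ($\rho_b=1$, $L=W=\sqrt M$, unscaled axial coordinate $s$) respectively. *)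

theory Defs
  imports "HOL-Analysis.Analysis"
begin

text \<open>Points of the plane are represented as complex numbers. Configurations of N
particles are functions nat \<Rightarrow> complex restricted to {..<N}, with the product
Lebesgue measure.\<close>

definition ocp_integrand :: "nat \<Rightarrow> real \<Rightarrow> real \<Rightarrow> (nat \<Rightarrow> complex) \<Rightarrow> real" where
  "ocp_integrand N \<Gamma> \<rho>b r =
     exp (- \<Gamma> * (real N)^2 * (ln (sqrt (real N / (pi * \<rho>b))) / 2 - 3/8))
   * exp (- pi * \<Gamma> * \<rho>b * (\<Sum>j<N. (cmod (r j))^2) / 2)
   * (\<Prod>(j,k)\<in>{(j,k). j < k \<and> k < N}. cmod (r k - r j) powr \<Gamma>)"

definition ocp_Z :: "nat \<Rightarrow> real \<Rightarrow> real \<Rightarrow> real" where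
  "ocp_Z N \<Gamma> \<rho>b = (1 / fact N) *
     enn2real (\<integral>\<^sup>+ r. ennreal (ocp_integrand N \<Gamma> \<rho>b r)
                 \<partial>(PiM {..<N} (\<lambda>_. (lborel :: complex measure))))"

definition ocp_fN :: "real \<Rightarrow> real \<Rightarrow> nat \<Rightarrow> real" where
  "ocp_fN \<Gamma> \<rho>b N = - ln (ocp_Z N \<Gamma> \<rho>b) / real N"

definition beta_f :: "real \<Rightarrow> real \<Rightarrow> real" where
  "beta_f \<Gamma> \<rho>b = lim (ocp_fN \<Gamma> \<rho>b)"

definition rho_disk :: "real \<Rightarrow> real \<Rightarrow> real \<Rightarrow> real" where
  "rho_disk \<Gamma> M s = exp (beta_f \<Gamma> (1/pi)) / M powr (\<Gamma>/4) *
     exp (- M * \<Gamma> / 2 * (s^2 / M - 1) + M * \<Gamma> * ln (s / sqrt M)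
          - \<Gamma> / 2 * ln (s^2 / M - 1))"

definition rho_cyl :: "real \<Rightarrow> real \<Rightarrow> real \<Rightarrow> real" where
  "rho_cyl \<Gamma> M s = (2 * pi / sqrt M) powr (\<Gamma>/2) * exp (beta_f \<Gamma> 1) *
     exp (- \<Gamma> * pi * s^2 + \<Gamma> * pi * s / sqrt M)
     / (1 - exp (4 * pi * s / sqrt M)) powr (\<Gamma>/2)"

end

theory Submission
  imports Defs "HOL-Probability.Probability" "HOL-Real_Asymp.Real_Asymp"
begin

(*
  The substitution r = u / sqrt rho in the partition function multiplies Lebesgue measure by
  rho^(-N), the pair product by rho^(-Gamma N (N - 1) / 4) and the neutralising background
  factor by rho^(Gamma N^2 / 4), so Z_N(rho) = rho^(N (Gamma/4 - 1)) Z_N(1).  The integral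
  defining Z_N(1) is finite (the Gaussian weight beats the polynomial growth of the pair
  product) and positive (the integrand is bounded below near a configuration of well
  separated particles), so taking logarithms gives
  beta f(Gamma, rho) = (1 - Gamma/4) log rho + beta f(Gamma, 1).  This converts the constant
  e^(beta f(Gamma, 1)) of the cylinder into e^(beta f(Gamma, 1/pi)), and both limits become
  elementary asymptotics: the disk exponent tends to -Gamma y^2 - (Gamma/2) log (2|y|), and
  (2 pi / sqrt M) / (1 - e^(4 pi s / sqrt M)) tends to 1 / (2|s|).
*)

section \<open>Dilations and Gaussian bounds for Lebesgue measure\<close>

lemma nn_integral_lborel_scaleR:
  fixes g :: "'a::euclidean_space \<Rightarrow> ennreal"
  assumes "c \<noteq> 0" and [measurable]: "g \<in> borel_measurable borel"
  shows "(\<integral>\<^sup>+x. g x \<partial>lborel) = ennreal (\<bar>c\<bar> ^ DIM('a)) * (\<integral>\<^sup>+x. g (c *\<^sub>R x) \<partial>lborel)"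
proof -
  have "(\<integral>\<^sup>+x. g x \<partial>lborel) = (\<integral>\<^sup>+x. g x \<partial>density (distr lborel borel (\<lambda>x. 0 + c *\<^sub>R x)) (\<lambda>_. \<bar>c\<bar> ^ DIM('a)))"
    by (simp only: lborel_affine[OF \<open>c \<noteq> 0\<close>, symmetric])
  also have "\<dots> = ennreal (\<bar>c\<bar> ^ DIM('a)) * (\<integral>\<^sup>+x. g (c *\<^sub>R x) \<partial>lborel)"
    by (simp add: nn_integral_density nn_integral_distr nn_integral_cmult)
  finally show ?thesis .
qed

lemma nn_integral_PiM_lborel_scaleR:
  fixes f :: "('i \<Rightarrow> 'a::euclidean_space) \<Rightarrow> ennreal"
  assumes c: "c \<noteq> 0" and "finite I" and "f \<in> borel_measurable (PiM I (\<lambda>_. lborel))"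
  shows "(\<integral>\<^sup>+x. f x \<partial>PiM I (\<lambda>_. lborel))
       = ennreal (\<bar>c\<bar> ^ (DIM('a) * card I)) * (\<integral>\<^sup>+x. f (\<lambda>i\<in>I. c *\<^sub>R x i) \<partial>PiM I (\<lambda>_. lborel))"
  using \<open>finite I\<close> \<open>f \<in> _\<close>
proof (induction I arbitrary: f rule: finite_induct)
  case empty
  then show ?case by (simp add: PiM_empty nn_integral_count_space_finite)
next
  case (insert i I)
  interpret product_sigma_finite "\<lambda>_::'i. lborel :: 'a measure"
    by (simp add: product_sigma_finite_def sigma_finite_lborel)
  interpret I: finite_product_sigma_finite "\<lambda>_::'i. lborel :: 'a measure" I
    by standard (use insert in auto)
  note [measurable] = insert.prems
  let ?P = "\<lambda>J. PiM J (\<lambda>_::'i. lborel :: 'a measure)"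
  define K where "K = ennreal (\<bar>c\<bar> ^ DIM('a))"
  define L where "L = ennreal (\<bar>c\<bar> ^ (DIM('a) * card I))"
  have "(\<integral>\<^sup>+x. f x \<partial>?P (insert i I)) = (\<integral>\<^sup>+y. (\<integral>\<^sup>+x. f (x(i := y)) \<partial>?P I) \<partial>lborel)"
    using insert by (simp add: product_nn_integral_insert_rev)
  also have "\<dots> = (\<integral>\<^sup>+y. L * (\<integral>\<^sup>+x. f ((\<lambda>j\<in>I. c *\<^sub>R x j)(i := y)) \<partial>?P I) \<partial>lborel)"
    unfolding L_def using insert by (intro nn_integral_cong insert.IH) measurable
  also have "\<dots> = K * (\<integral>\<^sup>+y. L * (\<integral>\<^sup>+x. f ((\<lambda>j\<in>I. c *\<^sub>R x j)(i := c *\<^sub>R y)) \<partial>?P I) \<partial>lborel)"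
    unfolding K_def using insert by (intro nn_integral_lborel_scaleR c) measurable
  also have "\<dots> = K * L * (\<integral>\<^sup>+y. (\<integral>\<^sup>+x. f ((\<lambda>j\<in>insert i I. c *\<^sub>R (x(i := y)) j)) \<partial>?P I) \<partial>lborel)"
  proof -
    have eq: "(\<lambda>j\<in>I. c *\<^sub>R x j)(i := c *\<^sub>R y) = (\<lambda>j\<in>insert i I. c *\<^sub>R (x(i := y)) j)" for x :: "'i \<Rightarrow> 'a" and y
      using insert by (auto simp: fun_eq_iff)
    show ?thesis
      unfolding eq using insert by (subst nn_integral_cmult) (measurable, simp add: mult.assoc)
  qed
  also have "\<dots> = K * L * (\<integral>\<^sup>+x. f (\<lambda>j\<in>insert i I. c *\<^sub>R x j) \<partial>?P (insert i I))"
    using insert by (simp add: product_nn_integral_insert_rev)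
  also have "K * L = ennreal (\<bar>c\<bar> ^ (DIM('a) * card (insert i I)))"
    using insert by (simp add: K_def L_def ennreal_mult' power_add)
  finally show ?case .
qed

lemma nn_integral_gaussian_finite:
  fixes b :: real assumes b: "b > 0"
  shows "(\<integral>\<^sup>+x. ennreal (exp (- b * (norm x)^2)) \<partial>(lborel :: 'a::euclidean_space measure)) < \<infinity>"
proof -
  define \<sigma> where "\<sigma> = sqrt (1 / (2 * b))"
  have \<sigma>: "\<sigma> > 0" "\<sigma>^2 = 1 / (2 * b)"
    using b by (auto simp: \<sigma>_def)
  have "(\<integral>\<^sup>+t. ennreal (normal_density 0 \<sigma> t) \<partial>lborel) = 1"
    using \<sigma> by (subst nn_integral_eq_integral) (auto simp: integral_normal_density)
  moreover have "exp (- b * t^2) = sqrt (2 * pi * \<sigma>^2) * normal_density 0 \<sigma> t" for t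
    using \<sigma> b unfolding normal_density_def by (simp add: field_simps)
  ultimately have line: "(\<integral>\<^sup>+t. ennreal (exp (- b * t^2)) \<partial>lborel) = ennreal (sqrt (2 * pi * \<sigma>^2))"
    by (simp add: ennreal_mult nn_integral_cmult)
  have "exp (- b * (norm x)^2) = (\<Prod>i\<in>Basis. exp (- b * (x \<bullet> i)^2))" for x :: 'a
  proof -
    have "(norm x)^2 = (\<Sum>i\<in>Basis. (x \<bullet> i)^2)"
      by (subst dot_square_norm[symmetric], subst euclidean_inner) (simp add: power2_eq_square)
    then show ?thesis
      by (simp add: sum_distrib_left exp_sum)
  qed
  then have "(\<integral>\<^sup>+x. ennreal (exp (- b * (norm x)^2)) \<partial>(lborel :: 'a measure))
      = (\<integral>\<^sup>+x. (\<Prod>i\<in>Basis. (\<lambda>_ t. ennreal (exp (- b * t^2))) i (x \<bullet> i)) \<partial>(lborel :: 'a measure))"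
    by (simp add: prod_ennreal)
  also have "\<dots> = (\<Prod>i\<in>(Basis :: 'a set). \<integral>\<^sup>+t. ennreal (exp (- b * t^2)) \<partial>lborel)"
    by (rule nn_integral_lborel_prod) auto
  also have "\<dots> < \<infinity>"
    unfolding line by (simp add: power_eq_top_ennreal less_top[symmetric])
  finally show ?thesis .
qed

lemma powr_gaussian_bounded:
  fixes p b :: real assumes p: "p \<ge> 0" and b: "b > 0"
  obtains C where "\<And>t. t \<ge> 0 \<Longrightarrow> (1 + t) powr p * exp (- b * t^2) \<le> C"
proof -
  have "((\<lambda>t. (1 + t) powr p * exp (- b * t^2)) \<longlongrightarrow> 0) at_top"
    using b by real_asymp
  then have "\<forall>\<^sub>F t in at_top. (1 + t) powr p * exp (- b * t^2) < 1"
    by (rule order_tendstoD) simp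
  then obtain T where T: "\<And>t. t \<ge> T \<Longrightarrow> (1 + t) powr p * exp (- b * t^2) < 1"
    by (auto simp: eventually_at_top_linorder)
  have "(1 + t) powr p * exp (- b * t^2) \<le> max 1 ((1 + max T 0) powr p)" if "t \<ge> 0" for t
  proof (cases "t \<ge> T")
    case False
    with that p b have "(1 + t) powr p * exp (- b * t^2) \<le> (1 + max T 0) powr p * 1"
      by (intro mult_mono powr_mono2) auto
    then show ?thesis by simp
  qed (use T in force)
  then show ?thesis using that by blast
qed

lemma nn_integral_powr_gaussian_finite:
  fixes p b :: real assumes p: "p \<ge> 0" and b: "b > 0"
  shows "(\<integral>\<^sup>+x. ennreal ((1 + norm x) powr p * exp (- b * (norm x)^2)) \<partial>(lborel :: 'a::euclidean_space measure)) < \<infinity>"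
proof -
  obtain C where C: "\<And>t. t \<ge> 0 \<Longrightarrow> (1 + t) powr p * exp (- (b / 2) * t^2) \<le> C"
    using powr_gaussian_bounded[OF p, of "b / 2"] b by auto
  have "(\<integral>\<^sup>+x. ennreal ((1 + norm x) powr p * exp (- b * (norm x)^2)) \<partial>(lborel :: 'a measure))
      \<le> (\<integral>\<^sup>+x. ennreal C * ennreal (exp (- (b / 2) * (norm x)^2)) \<partial>(lborel :: 'a measure))"
  proof (rule nn_integral_mono)
    fix x :: 'a
    have "(1 + norm x) powr p * exp (- b * (norm x)^2)
        = ((1 + norm x) powr p * exp (- (b / 2) * (norm x)^2)) * exp (- (b / 2) * (norm x)^2)"
      by (simp add: mult.assoc flip: exp_add)
    also have "\<dots> \<le> C * exp (- (b / 2) * (norm x)^2)"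
      using C[of "norm x"] by (intro mult_right_mono) auto
    finally show "ennreal ((1 + norm x) powr p * exp (- b * (norm x)^2)) \<le> ennreal C * ennreal (exp (- (b / 2) * (norm x)^2))"
      by (simp add: ennreal_mult''[symmetric] ennreal_leI)
  qed
  also have "\<dots> < \<infinity>"
    using nn_integral_gaussian_finite[of "b / 2", where 'a = 'a] b
    by (simp add: nn_integral_cmult ennreal_mult_less_top)
  finally show ?thesis .
qed

section \<open>Scaling of the partition function\<close>

definition pairs_below :: "nat \<Rightarrow> (nat \<times> nat) set" where
  "pairs_below N = {(j, k). j < k \<and> k < N}"

lemma finite_pairs_below [simp]: "finite (pairs_below N)"
  by (rule finite_subset[of _ "{..<N} \<times> {..<N}"]) (auto simp: pairs_below_def)

lemma card_pairs_below: "2 * card (pairs_below N) = N * (N - 1)"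
proof (induction N)
  case 0
  then show ?case by (simp add: pairs_below_def)
next
  case (Suc N)
  have "pairs_below (Suc N) = pairs_below N \<union> (\<lambda>j. (j, N)) ` {..<N}"
    by (auto simp: pairs_below_def)
  also have "card \<dots> = card (pairs_below N) + card ((\<lambda>j. (j, N)) ` {..<N})"
    using finite_pairs_below[of N] by (intro card_Un_disjoint) (auto simp: pairs_below_def)
  also have "card ((\<lambda>j. (j, N)) ` {..<N}) = N"
    by (simp add: card_image inj_on_def)
  finally show ?case using Suc by (cases N) simp_all
qed

lemma ocp_integrand_altdef:
  "ocp_integrand N \<Gamma> \<rho> r =
     exp (- \<Gamma> * (real N)^2 * (ln (sqrt (real N / (pi * \<rho>))) / 2 - 3/8))
   * exp (- pi * \<Gamma> * \<rho> * (\<Sum>j<N. (cmod (r j))^2) / 2)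
   * (\<Prod>(j, k)\<in>pairs_below N. cmod (r k - r j) powr \<Gamma>)"
  by (simp add: ocp_integrand_def pairs_below_def)

lemma ocp_integrand_nonneg: "0 \<le> ocp_integrand N \<Gamma> \<rho> r"
  unfolding ocp_integrand_altdef by (intro mult_nonneg_nonneg prod_nonneg) auto

lemma borel_measurable_ocp_integrand [measurable]:
  "ocp_integrand N \<Gamma> \<rho> \<in> borel_measurable (PiM {..<N} (\<lambda>_. lborel))"
proof -
  have [measurable]: "(\<lambda>r. cmod (r k - r j) powr \<Gamma>) \<in> borel_measurable (PiM {..<N} (\<lambda>_. lborel))"
    if "(j, k) \<in> pairs_below N" for j k
    using that by (simp add: pairs_below_def) measurable
  show ?thesis
    unfolding ocp_integrand_altdef[abs_def] by measurable
qed

lemma ocp_integrand_restrict: "ocp_integrand N \<Gamma> \<rho> (restrict r {..<N}) = ocp_integrand N \<Gamma> \<rho> r"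
  unfolding ocp_integrand_altdef by (auto intro!: arg_cong2[where f = "(*)"] prod.cong simp: pairs_below_def)

lemma ocp_background_factor_scaling:
  assumes \<rho>: "\<rho> > 0"
  shows "exp (- \<Gamma> * (real N)^2 * (ln (sqrt (real N / (pi * \<rho>))) / 2 - 3/8))
       = \<rho> powr (\<Gamma> * (real N)^2 / 4) * exp (- \<Gamma> * (real N)^2 * (ln (sqrt (real N / (pi * 1))) / 2 - 3/8))"
proof (cases "N = 0")
  case False
  then have ln_density: "ln (sqrt (real N / (pi * \<rho>))) = ln (sqrt (real N / (pi * 1))) - ln \<rho> / 2"
    using \<rho> by (simp add: ln_sqrt ln_div ln_mult field_simps)
  have "\<rho> powr (\<Gamma> * (real N)^2 / 4) * exp (- \<Gamma> * (real N)^2 * (ln (sqrt (real N / (pi * 1))) / 2 - 3/8))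
      = exp (\<Gamma> * (real N)^2 / 4 * ln \<rho> + - \<Gamma> * (real N)^2 * (ln (sqrt (real N / (pi * 1))) / 2 - 3/8))"
    using \<rho> by (simp add: powr_def flip: exp_add)
  also have "\<Gamma> * (real N)^2 / 4 * ln \<rho> + - \<Gamma> * (real N)^2 * (ln (sqrt (real N / (pi * 1))) / 2 - 3/8)
      = - \<Gamma> * (real N)^2 * (ln (sqrt (real N / (pi * \<rho>))) / 2 - 3/8)"
    unfolding ln_density by (simp add: field_simps)
  finally show ?thesis ..
qed (use \<rho> in simp)

lemma ocp_integrand_scaleR:
  assumes \<rho>: "\<rho> > 0"
  shows "ocp_integrand N \<Gamma> \<rho> (\<lambda>j. (1 / sqrt \<rho>) *\<^sub>R u j) = \<rho> powr (\<Gamma> * N / 4) * ocp_integrand N \<Gamma> 1 u"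
proof -
  let ?c = "1 / sqrt \<rho>"
  have gauss: "\<rho> * (\<Sum>j<N. (cmod (?c *\<^sub>R u j))^2) = (\<Sum>j<N. (cmod (u j))^2)"
    using \<rho> by (simp add: sum_distrib_left power_mult_distrib power_divide)
  have "cmod (?c *\<^sub>R u k - ?c *\<^sub>R u j) powr \<Gamma> = \<rho> powr (- \<Gamma> / 2) * cmod (u k - u j) powr \<Gamma>" for j k
  proof -
    have "sqrt \<rho> powr \<Gamma> = \<rho> powr (\<Gamma> / 2)"
      using \<rho> by (simp add: powr_half_sqrt[symmetric] powr_powr)
    then show ?thesis
      using \<rho> by (simp add: powr_divide powr_minus_divide flip: scaleR_diff_right)
  qed
  then have vandermonde: "(\<Prod>(j, k)\<in>pairs_below N. cmod (?c *\<^sub>R u k - ?c *\<^sub>R u j) powr \<Gamma>)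
      = \<rho> powr (- \<Gamma> / 2 * card (pairs_below N)) * (\<Prod>(j, k)\<in>pairs_below N. cmod (u k - u j) powr \<Gamma>)"
    using \<rho> by (simp add: prod.distrib case_prod_unfold powr_realpow[symmetric] powr_powr)
  have card: "real (card (pairs_below N)) = real N * (real N - 1) / 2"
    using arg_cong[OF card_pairs_below[of N], of real] by (cases N) (simp_all add: algebra_simps)
  have "\<Gamma> * (real N)^2 / 4 + - \<Gamma> / 2 * card (pairs_below N) = \<Gamma> * N / 4"
    unfolding card by (simp add: power2_eq_square field_simps)
  then have "\<rho> powr (\<Gamma> * (real N)^2 / 4) * \<rho> powr (- \<Gamma> / 2 * card (pairs_below N)) = \<rho> powr (\<Gamma> * N / 4)"
    by (simp only: powr_add[symmetric])
  then show ?thesis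
    unfolding ocp_integrand_altdef ocp_background_factor_scaling[OF \<rho>] vandermonde
      mult.assoc[of "- pi * \<Gamma>"] gauss
    by (simp add: mult_ac)
qed

lemma ocp_Z_scaling:
  assumes \<rho>: "\<rho> > 0"
  shows "ocp_Z N \<Gamma> \<rho> = \<rho> powr (N * (\<Gamma> / 4 - 1)) * ocp_Z N \<Gamma> 1"
proof -
  let ?P = "PiM {..<N} (\<lambda>_. lborel :: complex measure)"
  let ?c = "1 / sqrt \<rho>"
  have jacobian: "\<bar>?c\<bar> ^ (DIM(complex) * card {..<N}) = \<rho> powr (- real N)"
    using \<rho> by (simp add: power_mult power_divide powr_minus_divide powr_realpow)
  have "(\<integral>\<^sup>+r. ennreal (ocp_integrand N \<Gamma> \<rho> r) \<partial>?P)
      = ennreal (\<rho> powr (- real N)) * (\<integral>\<^sup>+u. ennreal (ocp_integrand N \<Gamma> \<rho> (\<lambda>j\<in>{..<N}. ?c *\<^sub>R u j)) \<partial>?P)"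
    unfolding jacobian[symmetric] by (rule nn_integral_PiM_lborel_scaleR) (use \<rho> in auto)
  also have "\<dots> = ennreal (\<rho> powr (- real N)) * (\<integral>\<^sup>+u. ennreal (\<rho> powr (\<Gamma> * N / 4)) * ennreal (ocp_integrand N \<Gamma> 1 u) \<partial>?P)"
    using \<rho> by (simp add: ocp_integrand_restrict ocp_integrand_scaleR ennreal_mult ocp_integrand_nonneg)
  also have "\<dots> = ennreal (\<rho> powr (- real N)) * ennreal (\<rho> powr (\<Gamma> * N / 4)) * (\<integral>\<^sup>+u. ennreal (ocp_integrand N \<Gamma> 1 u) \<partial>?P)"
    by (subst nn_integral_cmult) (simp_all add: mult.assoc)
  also have "ennreal (\<rho> powr (- real N)) * ennreal (\<rho> powr (\<Gamma> * N / 4)) = ennreal (\<rho> powr (N * (\<Gamma> / 4 - 1)))"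
    by (simp add: ennreal_mult[symmetric] powr_add[symmetric] algebra_simps)
  finally show ?thesis
    unfolding ocp_Z_def by (simp add: enn2real_mult)
qed

lemma prod_pairs_below_powr_le:
  fixes u :: "nat \<Rightarrow> 'a::real_normed_vector"
  assumes \<Gamma>: "\<Gamma> \<ge> 0"
  shows "(\<Prod>(j, k)\<in>pairs_below N. norm (u k - u j) powr \<Gamma>)
       \<le> 2 powr (\<Gamma> * card (pairs_below N)) * (\<Prod>j<N. (1 + norm (u j)) powr (\<Gamma> * card (pairs_below N)))"
proof -
  let ?p = "\<Gamma> * card (pairs_below N)"
  define m where "m = (\<Prod>j<N. 1 + norm (u j))"
  have m: "1 + norm (u j) \<le> m" if "j < N" for j
    using prod_mono2[of "{..<N}" "{j}" "\<lambda>j. 1 + norm (u j)"] that by (simp add: m_def)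
  have m_pos: "m > 0"
    unfolding m_def by (simp add: prod_pos add_pos_nonneg)
  have "(\<Prod>(j, k)\<in>pairs_below N. norm (u k - u j) powr \<Gamma>) \<le> (\<Prod>(j, k)\<in>pairs_below N. (2 * m) powr \<Gamma>)"
  proof (intro prod_mono, clarify)
    fix j k assume "(j, k) \<in> pairs_below N"
    then have "norm (u k - u j) \<le> 2 * m"
      using m[of j] m[of k] norm_triangle_ineq4[of "u k" "u j"] by (auto simp: pairs_below_def)
    then show "0 \<le> norm (u k - u j) powr \<Gamma> \<and> norm (u k - u j) powr \<Gamma> \<le> (2 * m) powr \<Gamma>"
      using \<Gamma> by (simp add: powr_mono2)
  qed
  also have "\<dots> = ((2 * m) powr \<Gamma>) powr card (pairs_below N)"
    using m_pos by (simp add: powr_realpow)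
  also have "\<dots> = 2 powr ?p * m powr ?p"
    using m_pos by (simp add: powr_powr powr_mult)
  also have "m powr ?p = (\<Prod>j<N. (1 + norm (u j)) powr ?p)"
    unfolding m_def by (rule prod_powr_distrib)
  finally show ?thesis .
qed

lemma ocp_integrand_le_prod:
  assumes \<Gamma>: "\<Gamma> \<ge> 0"
  obtains C where "\<And>u. ocp_integrand N \<Gamma> \<rho> u \<le> C * (\<Prod>j<N.
      (1 + cmod (u j)) powr (\<Gamma> * card (pairs_below N)) * exp (- pi * \<Gamma> * \<rho> * (cmod (u j))^2 / 2))"
proof
  fix u :: "nat \<Rightarrow> complex"
  let ?p = "\<Gamma> * card (pairs_below N)"
  have gauss: "exp (- pi * \<Gamma> * \<rho> * (\<Sum>j<N. (cmod (u j))^2) / 2) = (\<Prod>j<N. exp (- pi * \<Gamma> * \<rho> * (cmod (u j))^2 / 2))"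
    by (simp add: sum_distrib_left sum_divide_distrib exp_sum)
  let ?E = "exp (- \<Gamma> * (real N)^2 * (ln (sqrt (real N / (pi * \<rho>))) / 2 - 3/8))"
  have "ocp_integrand N \<Gamma> \<rho> u
      \<le> ?E * (\<Prod>j<N. exp (- pi * \<Gamma> * \<rho> * (cmod (u j))^2 / 2)) * (2 powr ?p * (\<Prod>j<N. (1 + cmod (u j)) powr ?p))"
    unfolding ocp_integrand_altdef gauss using prod_pairs_below_powr_le[OF \<Gamma>, of u]
    by (intro mult_left_mono) (simp_all add: prod_nonneg)
  then show "ocp_integrand N \<Gamma> \<rho> u \<le> ?E * 2 powr ?p
      * (\<Prod>j<N. (1 + cmod (u j)) powr ?p * exp (- pi * \<Gamma> * \<rho> * (cmod (u j))^2 / 2))"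
    by (simp add: prod.distrib mult_ac)
qed

lemma nn_integral_ocp_integrand_finite:
  assumes \<Gamma>: "\<Gamma> > 0" and \<rho>: "\<rho> > 0"
  shows "(\<integral>\<^sup>+u. ennreal (ocp_integrand N \<Gamma> \<rho> u) \<partial>PiM {..<N} (\<lambda>_. lborel)) < \<infinity>"
proof -
  interpret product_sigma_finite "\<lambda>_::nat. lborel :: complex measure"
    by (simp add: product_sigma_finite_def sigma_finite_lborel)
  let ?p = "\<Gamma> * card (pairs_below N)"
  define h where "h z = (1 + cmod z) powr ?p * exp (- (pi * \<Gamma> * \<rho> / 2) * (cmod z)^2)" for z
  obtain C where C: "\<And>u. ocp_integrand N \<Gamma> \<rho> u \<le> C * (\<Prod>j<N. h (u j))"
    using ocp_integrand_le_prod[of \<Gamma> N \<rho>] \<Gamma> unfolding h_def by (auto simp: mult_ac)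
  have [measurable]: "h \<in> borel_measurable borel"
    unfolding h_def by measurable
  have "(\<integral>\<^sup>+u. ennreal (ocp_integrand N \<Gamma> \<rho> u) \<partial>PiM {..<N} (\<lambda>_. lborel))
      \<le> (\<integral>\<^sup>+u. ennreal C * (\<Prod>j<N. ennreal (h (u j))) \<partial>PiM {..<N} (\<lambda>_. lborel))"
    using C ocp_integrand_nonneg
    by (intro nn_integral_mono) (auto simp: h_def prod_ennreal prod_nonneg ennreal_mult''[symmetric] intro: ennreal_leI order_trans)
  also have "\<dots> = ennreal C * (\<integral>\<^sup>+u. (\<Prod>j<N. ennreal (h (u j))) \<partial>PiM {..<N} (\<lambda>_. lborel))"
    by (rule nn_integral_cmult) measurable
  also have "\<dots> = ennreal C * (\<Prod>j<N. \<integral>\<^sup>+z. ennreal (h z) \<partial>lborel)"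
    using product_nn_integral_prod[of "{..<N}" "\<lambda>_ z. ennreal (h z)"] by simp
  also have "\<dots> < \<infinity>"
    using nn_integral_powr_gaussian_finite[of ?p "pi * \<Gamma> * \<rho> / 2", where 'a = complex] \<Gamma> \<rho>
    by (simp add: h_def less_top[symmetric] ennreal_mult_eq_top_iff power_eq_top_ennreal)
  finally show ?thesis .
qed

lemma norm_diff_ge_half_if_near_of_nat:
  fixes z w :: "'a::real_normed_algebra_1"
  assumes "j < k" and "norm (w - of_nat j) < 1/4" and "norm (z - of_nat k) < 1/4"
  shows "1/2 \<le> norm (z - w)"
proof -
  have of_nat_diff': "(of_nat k - of_nat j :: 'a) = of_nat (k - j)"
    using \<open>j < k\<close> by (simp add: of_nat_diff)
  have "1 \<le> norm (of_nat k - of_nat j :: 'a)"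
    unfolding of_nat_diff' norm_of_nat using \<open>j < k\<close> by simp
  also have "(of_nat k - of_nat j :: 'a) = ((z - w) - (z - of_nat k)) + (w - of_nat j)"
    by (simp add: algebra_simps)
  also have "norm \<dots> \<le> norm ((z - w) - (z - of_nat k)) + norm (w - of_nat j)"
    by (rule norm_triangle_ineq)
  also have "\<dots> \<le> norm (z - w) + norm (z - of_nat k) + norm (w - of_nat j)"
    using norm_triangle_ineq4[of "z - w" "z - of_nat k"] by linarith
  finally show ?thesis
    using assms by linarith
qed

lemma ocp_integrand_lower_bound:
  assumes \<Gamma>: "\<Gamma> \<ge> 0" and \<rho>: "\<rho> > 0"
  obtains \<epsilon> where "\<epsilon> > 0"
    and "\<And>u. u \<in> PiE {..<N} (\<lambda>j. ball (of_nat j :: complex) (1/4)) \<Longrightarrow> \<epsilon> \<le> ocp_integrand N \<Gamma> \<rho> u"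
proof
  define B where "B = (\<Sum>j<N. (real j + 1)^2)"
  show "0 < exp (- \<Gamma> * (real N)^2 * (ln (sqrt (real N / (pi * \<rho>))) / 2 - 3/8))
      * exp (- pi * \<Gamma> * \<rho> * B / 2) * (\<Prod>(j, k)\<in>pairs_below N. (1/2) powr \<Gamma>)"
    by (simp add: prod_pos)
  fix u assume u: "u \<in> PiE {..<N} (\<lambda>j. ball (of_nat j :: complex) (1/4))"
  have near: "cmod (u j - of_nat j) < 1/4" if "j < N" for j
    using u that by (auto simp: PiE_iff dist_norm norm_minus_commute)
  have "(\<Sum>j<N. (cmod (u j))^2) \<le> B"
    unfolding B_def
  proof (intro sum_mono power_mono)
    fix j assume "j \<in> {..<N}"
    then show "cmod (u j) \<le> real j + 1"
      using near[of j] norm_triangle_ineq2[of "u j" "of_nat j"] by simp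
  qed simp
  then have "exp (- pi * \<Gamma> * \<rho> * B / 2) \<le> exp (- pi * \<Gamma> * \<rho> * (\<Sum>j<N. (cmod (u j))^2) / 2)"
    using \<Gamma> \<rho> by (simp add: mult_left_mono)
  moreover have "(\<Prod>(j, k)\<in>pairs_below N. (1/2) powr \<Gamma>) \<le> (\<Prod>(j, k)\<in>pairs_below N. cmod (u k - u j) powr \<Gamma>)"
  proof (intro prod_mono, clarify)
    fix j k assume "(j, k) \<in> pairs_below N"
    then have jk: "j < k" "k < N" by (auto simp: pairs_below_def)
    have "1/2 \<le> cmod (u k - u j)"
      using jk near[of j] near[of k] by (intro norm_diff_ge_half_if_near_of_nat) auto
    then show "0 \<le> (1/2) powr \<Gamma> \<and> (1/2) powr \<Gamma> \<le> cmod (u k - u j) powr \<Gamma>"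
      using \<Gamma> by (simp add: powr_mono2)
  qed
  ultimately show "exp (- \<Gamma> * (real N)^2 * (ln (sqrt (real N / (pi * \<rho>))) / 2 - 3/8))
      * exp (- pi * \<Gamma> * \<rho> * B / 2) * (\<Prod>(j, k)\<in>pairs_below N. (1/2) powr \<Gamma>) \<le> ocp_integrand N \<Gamma> \<rho> u"
    unfolding ocp_integrand_altdef by (intro mult_mono mult_left_mono) (simp_all add: prod_nonneg)
qed

lemma nn_integral_ocp_integrand_pos:
  assumes \<Gamma>: "\<Gamma> \<ge> 0" and \<rho>: "\<rho> > 0"
  shows "(\<integral>\<^sup>+u. ennreal (ocp_integrand N \<Gamma> \<rho> u) \<partial>PiM {..<N} (\<lambda>_. lborel)) > 0"
proof -
  interpret product_sigma_finite "\<lambda>_::nat. lborel :: complex measure"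
    by (simp add: product_sigma_finite_def sigma_finite_lborel)
  let ?P = "PiM {..<N} (\<lambda>_. lborel :: complex measure)"
  define S where "S = PiE {..<N} (\<lambda>j. ball (of_nat j :: complex) (1/4))"
  obtain \<epsilon> where \<epsilon>: "\<epsilon> > 0" "\<And>u. u \<in> S \<Longrightarrow> \<epsilon> \<le> ocp_integrand N \<Gamma> \<rho> u"
    using ocp_integrand_lower_bound[OF \<Gamma> \<rho>] unfolding S_def by metis
  have S: "S \<in> sets ?P"
    unfolding S_def by (rule sets_PiM_I_finite) auto
  have "emeasure ?P S = ennreal (\<Prod>j<N. unit_ball_vol 2 * (1/4)^2)"
    unfolding S_def by (subst emeasure_PiM) (auto simp: emeasure_ball prod_ennreal ennreal_power)
  then have "emeasure ?P S > 0"
    by (simp add: prod_pos)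
  with \<epsilon> have "0 < ennreal \<epsilon> * emeasure ?P S"
    by (simp add: ennreal_zero_less_mult_iff)
  also have "\<dots> = (\<integral>\<^sup>+u. ennreal \<epsilon> * indicator S u \<partial>?P)"
    using S by (simp add: nn_integral_cmult_indicator)
  also have "\<dots> \<le> (\<integral>\<^sup>+u. ennreal (ocp_integrand N \<Gamma> \<rho> u) \<partial>?P)"
    using \<epsilon> by (intro nn_integral_mono) (auto simp: indicator_def intro: ennreal_leI)
  finally show ?thesis .
qed

text \<open>Both bounds are needed: \<open>enn2real\<close> sends an infinite integral to 0, and \<open>ln 0 = 0\<close>.\<close>

lemma ocp_Z_pos:
  assumes "\<Gamma> > 0" and "\<rho> > 0"
  shows "ocp_Z N \<Gamma> \<rho> > 0"
  using nn_integral_ocp_integrand_pos[of \<Gamma> \<rho> N] nn_integral_ocp_integrand_finite[of \<Gamma> \<rho> N] assms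
  by (simp add: ocp_Z_def enn2real_positive_iff)

lemma ocp_fN_scaling:
  assumes "\<rho> > 0" and "N > 0" and "ocp_Z N \<Gamma> 1 > 0"
  shows "ocp_fN \<Gamma> \<rho> N = (1 - \<Gamma> / 4) * ln \<rho> + ocp_fN \<Gamma> 1 N"
proof -
  have "ln (ocp_Z N \<Gamma> \<rho>) = ln (\<rho> powr (N * (\<Gamma> / 4 - 1))) + ln (ocp_Z N \<Gamma> 1)"
    unfolding ocp_Z_scaling[OF \<open>\<rho> > 0\<close>] using assms by (intro ln_mult_pos) auto
  also have "ln (\<rho> powr (N * (\<Gamma> / 4 - 1))) = N * (\<Gamma> / 4 - 1) * ln \<rho>"
    by (rule ln_powr)
  finally have "ln (ocp_Z N \<Gamma> \<rho>) = N * (\<Gamma> / 4 - 1) * ln \<rho> + ln (ocp_Z N \<Gamma> 1)" .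
  then show ?thesis
    unfolding ocp_fN_def using \<open>N > 0\<close> by (simp add: field_simps)
qed

lemma beta_f_scaling:
  assumes "\<Gamma> > 0" and "\<rho> > 0" and "convergent (ocp_fN \<Gamma> 1)"
  shows "beta_f \<Gamma> \<rho> = (1 - \<Gamma> / 4) * ln \<rho> + beta_f \<Gamma> 1"
proof -
  have "(\<lambda>N. (1 - \<Gamma> / 4) * ln \<rho> + ocp_fN \<Gamma> 1 N) \<longlonglongrightarrow> (1 - \<Gamma> / 4) * ln \<rho> + beta_f \<Gamma> 1"
    using assms(3) unfolding beta_f_def by (intro tendsto_add tendsto_const) (simp add: convergent_LIMSEQ_iff)
  moreover have "\<forall>\<^sub>F N in sequentially. (1 - \<Gamma> / 4) * ln \<rho> + ocp_fN \<Gamma> 1 N = ocp_fN \<Gamma> \<rho> N"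
    using eventually_gt_at_top[of 0] by eventually_elim (simp add: ocp_fN_scaling[OF assms(2)] ocp_Z_pos assms(1))
  ultimately have "ocp_fN \<Gamma> \<rho> \<longlonglongrightarrow> (1 - \<Gamma> / 4) * ln \<rho> + beta_f \<Gamma> 1"
    by (rule Lim_transform_eventually)
  then show ?thesis
    unfolding beta_f_def by (rule limI)
qed

lemma exp_beta_f_scaling:
  assumes "\<Gamma> > 0" and "\<rho> > 0" and "convergent (ocp_fN \<Gamma> 1)"
  shows "exp (beta_f \<Gamma> \<rho>) = \<rho> powr (1 - \<Gamma> / 4) * exp (beta_f \<Gamma> 1)"
proof -
  have "exp (beta_f \<Gamma> \<rho>) = exp ((1 - \<Gamma> / 4) * ln \<rho>) * exp (beta_f \<Gamma> 1)"
    unfolding beta_f_scaling[OF assms] by (rule exp_add)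
  also have "exp ((1 - \<Gamma> / 4) * ln \<rho>) = \<rho> powr (1 - \<Gamma> / 4)"
    using \<open>\<rho> > 0\<close> by (simp add: powr_def)
  finally show ?thesis .
qed

section \<open>Asymptotics of the densities\<close>

lemma rho_disk_limit:
  fixes \<Gamma> y :: real assumes "y < 0"
  shows "((\<lambda>x. rho_disk \<Gamma> (x + 1) (sqrt x - y))
     \<longlongrightarrow> exp (beta_f \<Gamma> (1/pi)) * exp (- \<Gamma> * y^2) / (2 * \<bar>y\<bar>) powr (\<Gamma>/2)) at_top"
  using assms unfolding rho_disk_def
  by real_asymp (simp add: powr_def power2_eq_square field_simps flip: exp_add exp_diff)

lemma rho_cyl_limit:
  fixes \<Gamma> s :: real assumes s: "s < 0"
  shows "((\<lambda>M. rho_cyl \<Gamma> M s)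
     \<longlongrightarrow> exp (beta_f \<Gamma> 1) * exp (- \<Gamma> * pi * s^2) / (2 * \<bar>s\<bar>) powr (\<Gamma>/2)) at_top"
proof -
  define q where "q M = (2 * pi / sqrt M) / (1 - exp (4 * pi * s / sqrt M))" for M
  have "(q \<longlongrightarrow> 1 / (2 * \<bar>s\<bar>)) at_top"
    using s unfolding q_def by real_asymp (simp add: field_simps)
  then have "((\<lambda>M. exp (beta_f \<Gamma> 1) * exp (- \<Gamma> * pi * s^2 + \<Gamma> * pi * s / sqrt M) * q M powr (\<Gamma>/2))
      \<longlongrightarrow> exp (beta_f \<Gamma> 1) * exp (- \<Gamma> * pi * s^2 + 0) * (1 / (2 * \<bar>s\<bar>)) powr (\<Gamma>/2)) at_top"
    using s by (intro tendsto_intros) (real_asymp, auto)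
  moreover have "\<forall>\<^sub>F M in at_top. exp (beta_f \<Gamma> 1) * exp (- \<Gamma> * pi * s^2 + \<Gamma> * pi * s / sqrt M) * q M powr (\<Gamma>/2)
      = rho_cyl \<Gamma> M s"
    using eventually_gt_at_top[of 0]
  proof eventually_elim
    case (elim M)
    have "0 < 1 - exp (4 * pi * s / sqrt M)" using s elim by (simp add: divide_neg_pos mult_pos_neg)
    then show ?case using elim unfolding rho_cyl_def q_def by (simp add: powr_divide powr_mult)
  qed
  ultimately have "((\<lambda>M. rho_cyl \<Gamma> M s)
      \<longlongrightarrow> exp (beta_f \<Gamma> 1) * exp (- \<Gamma> * pi * s^2 + 0) * (1 / (2 * \<bar>s\<bar>)) powr (\<Gamma>/2)) at_top"
    by (rule Lim_transform_eventually)
  then show ?thesis by (simp add: powr_divide)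
qed

lemma rho_cyl_rescaled_limit:
  assumes "\<Gamma> > 0" and "convergent (ocp_fN \<Gamma> 1)" and "y < 0"
  shows "((\<lambda>M. rho_cyl \<Gamma> M (y / sqrt pi) / pi)
     \<longlongrightarrow> exp (beta_f \<Gamma> (1/pi)) * exp (- \<Gamma> * y^2) / (2 * \<bar>y\<bar>) powr (\<Gamma>/2)) at_top"
proof -
  have "y / sqrt pi < 0"
    using \<open>y < 0\<close> by (simp add: divide_neg_pos)
  then have "((\<lambda>M. rho_cyl \<Gamma> M (y / sqrt pi) / pi) \<longlongrightarrow>
      exp (beta_f \<Gamma> 1) * exp (- \<Gamma> * pi * (y / sqrt pi)^2) / (2 * \<bar>y / sqrt pi\<bar>) powr (\<Gamma>/2) / pi) at_top"
    by (intro tendsto_divide tendsto_const rho_cyl_limit) auto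
  also have "exp (beta_f \<Gamma> 1) * exp (- \<Gamma> * pi * (y / sqrt pi)^2) / (2 * \<bar>y / sqrt pi\<bar>) powr (\<Gamma>/2) / pi
      = exp (beta_f \<Gamma> (1/pi)) * exp (- \<Gamma> * y^2) / (2 * \<bar>y\<bar>) powr (\<Gamma>/2)"
  proof -
    have gauss: "- \<Gamma> * pi * (y / sqrt pi)^2 = - \<Gamma> * y^2"
      by (simp add: power_divide)
    have distance: "(2 * \<bar>y / sqrt pi\<bar>) powr (\<Gamma>/2) = (2 * \<bar>y\<bar>) powr (\<Gamma>/2) / pi powr (\<Gamma>/4)"
      by (simp add: powr_divide powr_half_sqrt[symmetric] powr_powr)
    have "exp (beta_f \<Gamma> 1) * exp (- \<Gamma> * pi * (y / sqrt pi)^2) / (2 * \<bar>y / sqrt pi\<bar>) powr (\<Gamma>/2) / pi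
        = pi powr (\<Gamma>/4) / pi * exp (beta_f \<Gamma> 1) * exp (- \<Gamma> * y^2) / (2 * \<bar>y\<bar>) powr (\<Gamma>/2)"
      unfolding gauss distance by (simp add: field_simps)
    also have "pi powr (\<Gamma>/4) / pi = (1/pi) powr (1 - \<Gamma>/4)"
      by (simp add: powr_diff powr_divide)
    also have "(1/pi) powr (1 - \<Gamma>/4) * exp (beta_f \<Gamma> 1) = exp (beta_f \<Gamma> (1/pi))"
      using assms(1,2) by (intro exp_beta_f_scaling[symmetric]) auto
    finally show ?thesis .
  qed
  finally show ?thesis .
qed

theorem corollary1:
  fixes \<Gamma> y :: real
  assumes "\<Gamma> > 0"
    and "\<And>\<rho>b. \<rho>b > 0 \<Longrightarrow> convergent (ocp_fN \<Gamma> \<rho>b)"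
    and "y < 0"
  shows "((\<lambda>N::nat. rho_disk \<Gamma> (real (N + 1)) (sqrt (real N) - y))
           \<longlonglongrightarrow> exp (beta_f \<Gamma> (1/pi)) * exp (- \<Gamma> * y^2) / (2 * \<bar>y\<bar>) powr (\<Gamma>/2))
       \<and> ((\<lambda>N::nat. rho_cyl \<Gamma> (real N) (y / sqrt pi) / pi)
           \<longlonglongrightarrow> exp (beta_f \<Gamma> (1/pi)) * exp (- \<Gamma> * y^2) / (2 * \<bar>y\<bar>) powr (\<Gamma>/2))"
proof
  show "(\<lambda>N::nat. rho_disk \<Gamma> (real (N + 1)) (sqrt (real N) - y))
      \<longlonglongrightarrow> exp (beta_f \<Gamma> (1/pi)) * exp (- \<Gamma> * y^2) / (2 * \<bar>y\<bar>) powr (\<Gamma>/2)"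
    unfolding of_nat_add of_nat_1
    by (rule filterlim_compose[OF rho_disk_limit[OF \<open>y < 0\<close>] filterlim_real_sequentially])
  have "convergent (ocp_fN \<Gamma> 1)"
    by (rule assms(2)) simp
  then show "(\<lambda>N::nat. rho_cyl \<Gamma> (real N) (y / sqrt pi) / pi)
      \<longlonglongrightarrow> exp (beta_f \<Gamma> (1/pi)) * exp (- \<Gamma> * y^2) / (2 * \<bar>y\<bar>) powr (\<Gamma>/2)"
    using filterlim_compose[OF rho_cyl_rescaled_limit filterlim_real_sequentially] assms(1,3) by blast
qed

end
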